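(* Let $k\ge 1$ and let $G$ be a minimally $k$-connected graph with $n$ vertices and $m$ edges. Then $$|V_k|\ge (k+1)n-2m.$$
   Context: All graphs are finite, simple and undirected. A $k$-separator is a set of $k\ge 0$ vertices whose deletion leaves a disconnected graph. A graph is $k$-connected if it has more than $k$ vertices and contains no $(k-1)$-separator. A $k$-connected graph $G$ is minimally $k$-connected if $G-e$ is not $k$-connected for every edge $e$. $V_k$ denotes the set of vertices of $G$ of degree exactly $k$. *)

theory Defs
  imports Main
begin

definition simple_graph :: "'a set \<Rightarrow> 'a set set \<Rightarrow> bool" where
  "simple_graph V E \<longleftrightarrow> finite V \<and> (\<forall>e\<in>E. e \<subseteq> V \<and> card e = 2)"

inductive reachable :: "'a set \<Rightarrow> 'a set set \<Rightarrow> 'a \<Rightarrow> 'a \<Rightarrow> bool" for V E where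
  refl: "v \<in> V \<Longrightarrow> reachable V E v v"
| step: "reachable V E u v \<Longrightarrow> {v, w} \<in> E \<Longrightarrow> w \<in> V \<Longrightarrow> reachable V E u w"

definition connected_graph :: "'a set \<Rightarrow> 'a set set \<Rightarrow> bool" where
  "connected_graph V E \<longleftrightarrow> (\<forall>u\<in>V. \<forall>v\<in>V. reachable V E u v)"

definition del_vertices :: "'a set \<Rightarrow> 'a set set \<Rightarrow> 'a set \<Rightarrow> 'a set set" where
  "del_vertices V E S = {e\<in>E. e \<subseteq> V - S}"

definition separator :: "'a set \<Rightarrow> 'a set set \<Rightarrow> nat \<Rightarrow> 'a set \<Rightarrow> bool" where
  "separator V E k S \<longleftrightarrow> S \<subseteq> V \<and> card S = k \<and>
     \<not> connected_graph (V - S) (del_vertices V E S)"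

definition k_connected :: "'a set \<Rightarrow> 'a set set \<Rightarrow> nat \<Rightarrow> bool" where
  "k_connected V E k \<longleftrightarrow> card V > k \<and> (\<nexists>S. separator V E (k - 1) S)"

definition minimally_k_connected :: "'a set \<Rightarrow> 'a set set \<Rightarrow> nat \<Rightarrow> bool" where
  "minimally_k_connected V E k \<longleftrightarrow> k_connected V E k \<and>
     (\<forall>e\<in>E. \<not> k_connected V (E - {e}) k)"

definition degree :: "'a set set \<Rightarrow> 'a \<Rightarrow> nat" where
  "degree E v = card {e\<in>E. v \<in> e}"

definition V_deg :: "'a set \<Rightarrow> 'a set set \<Rightarrow> nat \<Rightarrow> 'a set" where
  "V_deg V E k = {v\<in>V. degree E v = k}"

end

theory Submission
  imports Defs
begin

text \<open>The bound is a degree count: in a k-connected graph every vertex has degree at least k,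
  since otherwise its neighbourhood, padded to k - 1 vertices, would separate it from the
  rest. Hence every vertex outside \<open>V\<^sub>k\<close> has degree at least k + 1, and the handshake lemma
  gives \<open>2m \<ge> (k + 1) n - |V\<^sub>k|\<close>.\<close>

definition neighbourhood :: "'a set set \<Rightarrow> 'a \<Rightarrow> 'a set" where
  "neighbourhood E v = (\<Union>e\<in>{e\<in>E. v \<in> e}. e - {v})"

lemma simple_graph_finite_edges:
  assumes "simple_graph V E"
  shows "finite E"
proof -
  have "E \<subseteq> Pow V" "finite V" using assms by (auto simp: simple_graph_def)
  then show ?thesis by (meson finite_Pow_iff finite_subset)
qed

lemma neighbourhood_subset:
  assumes "simple_graph V E"
  shows "neighbourhood E v \<subseteq> V"
  using assms by (auto simp: neighbourhood_def simple_graph_def)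

lemma card_neighbourhood_le_degree:
  assumes "simple_graph V E"
  shows "card (neighbourhood E v) \<le> degree E v"
proof -
  have "card (neighbourhood E v) \<le> (\<Sum>e\<in>{e\<in>E. v \<in> e}. card (e - {v}))"
    unfolding neighbourhood_def
    by (rule card_UN_le) (simp add: simple_graph_finite_edges[OF assms])
  also have "\<dots> = (\<Sum>e\<in>{e\<in>E. v \<in> e}. 1)"
    using assms by (intro sum.cong) (auto simp: simple_graph_def card_Diff_singleton)
  finally show ?thesis by (simp add: degree_def)
qed

lemma reachable_from_isolated:
  assumes "reachable W F v x" and "\<And>w. {v, w} \<in> F \<Longrightarrow> w \<in> W \<Longrightarrow> w = v"
  shows "x = v"
  using assms by (induction rule: reachable.induct) auto

lemma not_connected_if_isolated:
  assumes "w \<in> W" "v \<in> W" "w \<noteq> v" and "\<And>u. {v, u} \<in> F \<Longrightarrow> u \<in> W \<Longrightarrow> u = v"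
  shows "\<not> connected_graph W F"
  using assms reachable_from_isolated by (fastforce simp: connected_graph_def)

lemma separator_containing_neighbourhood:
  assumes "simple_graph V E" "v \<in> V" "S \<subseteq> V" "v \<notin> S" "neighbourhood E v \<subseteq> S"
    and "card S + 2 \<le> card V"
  shows "separator V E (card S) S"
proof -
  have "finite V" using assms(1) by (simp add: simple_graph_def)
  then have "card (V - S) \<ge> 2" using assms(3,6) by (simp add: card_Diff_subset finite_subset)
  then have "\<not> V - S \<subseteq> {v}"
    using card_mono[of "{v}" "V - S"] by auto
  then obtain w where w: "w \<in> V - S" "w \<noteq> v" by blast
  have "u = v" if "{v, u} \<in> del_vertices V E S" "u \<in> V - S" for u
    using that assms(5) by (auto simp: del_vertices_def neighbourhood_def)
  then have "\<not> connected_graph (V - S) (del_vertices V E S)"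
    using w assms(2,4) by (intro not_connected_if_isolated[of w _ v]) auto
  then show ?thesis using assms(3) by (simp add: separator_def)
qed

lemma k_connected_degree_ge:
  assumes "simple_graph V E" "k \<ge> 1" "k_connected V E k" "v \<in> V"
  shows "degree E v \<ge> k"
proof (rule ccontr)
  assume "\<not> k \<le> degree E v"
  let ?N = "neighbourhood E v"
  have N: "?N \<subseteq> V - {v}" "card ?N < k"
    using neighbourhood_subset[OF assms(1), of v] card_neighbourhood_le_degree[OF assms(1), of v]
          \<open>\<not> k \<le> degree E v\<close>
    by (auto simp: neighbourhood_def)
  have "finite V" using assms(1) by (simp add: simple_graph_def)
  have "card V > k" using assms(3) by (simp add: k_connected_def)
  have "card (V - {v} - ?N) = card V - 1 - card ?N"
    using N(1) \<open>finite V\<close> assms(4) by (simp add: card_Diff_subset finite_subset)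
  moreover have "k - 1 - card ?N \<le> card V - 1 - card ?N"
    using \<open>card V > k\<close> by simp
  ultimately obtain T where T: "T \<subseteq> V - {v} - ?N" "card T = k - 1 - card ?N"
    by (metis obtain_subset_with_card_n)
  let ?S = "?N \<union> T"
  have fin: "finite ?N" "finite T"
    using N(1) T(1) \<open>finite V\<close> by (auto intro: finite_subset)
  have "card ?S = k - 1"
    using T N(2) fin by (subst card_Un_disjoint) auto
  then have "separator V E (k - 1) ?S"
    using separator_containing_neighbourhood[OF assms(1,4), of ?S] N(1) T(1) \<open>card V > k\<close>
      assms(2) by auto
  then show False using assms(3) by (auto simp: k_connected_def)
qed

lemma handshake:
  assumes "simple_graph V E"
  shows "(\<Sum>v\<in>V. degree E v) = 2 * card E"
proof -
  have fin: "finite V" "finite E"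
    using assms simple_graph_finite_edges by (auto simp: simple_graph_def)
  have "(\<Sum>v\<in>V. degree E v) = (\<Sum>v\<in>V. \<Sum>e\<in>E. if v \<in> e then 1 else 0)"
    by (simp add: degree_def sum.If_cases fin Int_def)
  also have "\<dots> = (\<Sum>e\<in>E. \<Sum>v\<in>V. if v \<in> e then 1 else 0)"
    by (rule sum.swap)
  also have "\<dots> = (\<Sum>e\<in>E. card e)"
    using assms by (intro sum.cong) (auto simp: sum.If_cases fin simple_graph_def Int_absorb1)
  also have "\<dots> = (\<Sum>e\<in>E. 2)"
    using assms by (auto simp: simple_graph_def intro: sum.cong)
  finally show ?thesis by simp
qed

lemma degree_sum_ge_card_V_deg:
  assumes "finite V" and "\<And>v. v \<in> V \<Longrightarrow> degree E v \<ge> k"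
  shows "int (k + 1) * int (card V) - int (card (V_deg V E k)) \<le> (\<Sum>v\<in>V. int (degree E v))"
proof -
  let ?A = "V_deg V E k"
  have "int (k + 1) * int (card V) - int (card ?A)
      = (\<Sum>v\<in>V. int (k + 1) - (if v \<in> ?A then 1 else 0))"
    using assms(1) by (simp add: sum_subtractf sum.If_cases Int_absorb1 V_deg_def Int_def)
  also have "\<dots> \<le> (\<Sum>v\<in>V. int (degree E v))"
    using assms(2) by (intro sum_mono) (force simp: V_deg_def)
  finally show ?thesis .
qed

theorem mainTheorem3:
  fixes V :: "'a set" and E :: "'a set set" and k :: nat
  assumes "simple_graph V E"
    and "k \<ge> 1"
    and "minimally_k_connected V E k"
  shows "int (card (V_deg V E k)) \<ge> int (k + 1) * int (card V) - 2 * int (card E)"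
proof -
  have "k_connected V E k" using assms(3) by (simp add: minimally_k_connected_def)
  then have "\<And>v. v \<in> V \<Longrightarrow> degree E v \<ge> k"
    using k_connected_degree_ge[OF assms(1,2)] by simp
  moreover have "finite V" using assms(1) by (simp add: simple_graph_def)
  ultimately have "int (k + 1) * int (card V) - int (card (V_deg V E k))
      \<le> (\<Sum>v\<in>V. int (degree E v))"
    by (rule degree_sum_ge_card_V_deg[rotated])
  also have "\<dots> = 2 * int (card E)"
    using handshake[OF assms(1)] by (simp flip: of_nat_sum)
  finally show ?thesis by linarith
qed

end
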